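(* Let $G$ be a group acting on a set $X$, and let $\alpha\in\,]0,1]$. (1) Let $A\subset G$ and $Y\subset X$ be finite nonempty subsets such that $|A\cdot Y|\leq(2-\alpha)|Y|$. Then $A^{-1}A\subset\mathrm{Sym}_{\alpha}(Y)$. (2) Let $(\rho,V)$ be a linear representation of $G$ on a finite-dimensional vector space $V$ over a field $k$, let $A\subset G$ and let $W$ be a finite-dimensional $k$-subspace of $V$ such that $\dim\langle A\cdot W\rangle\leq(2-\alpha)\dim W$. Then $A^{-1}A\subset\mathrm{Sym}_{\alpha}(W)$.
   Context: $g\cdot x$ denotes the action of $g\in G$ on $x\in X$ (resp. on $v\in V$). For $A\subset G$, $Y\subset X$: $A\cdot Y=\{a\cdot y\mid a\in A,\ y\in Y\}$. For a subspace $W$: $A\cdot W$ denotes the set $\{a\cdot w\mid a\in A, w\in W\}$ and $\langle A\cdot W\rangle$ its $k$-linear span; $A^{-1}A=\{a^{-1}b\mid a,b\in A\}$. For a finite nonempty $Y\subset X$, $\mathrm{Sym}_{\alpha}(Y)=\{g\in G\mid |g\cdot Y\cap Y|\geq\alpha|Y|\}$. For a subspace $W$, $\mathrm{Sym}_{\alpha}(W)=\{g\in G\mid \dim(g\cdot W\cap W)\geq\alpha\dim W\}$. *)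

theory Defs
  imports Complex_Main "HOL-Algebra.Group_Action"
begin

definition invprod :: "('g, 'm) monoid_scheme \<Rightarrow> 'g set \<Rightarrow> 'g set" where
  "invprod G A = {inv\<^bsub>G\<^esub> a \<otimes>\<^bsub>G\<^esub> b | a b. a \<in> A \<and> b \<in> A}"

definition SymSet :: "('g, 'm) monoid_scheme \<Rightarrow> ('g \<Rightarrow> 'x \<Rightarrow> 'x) \<Rightarrow> real \<Rightarrow> 'x set \<Rightarrow> 'g set" where
  "SymSet G \<phi> \<alpha> Y = {g \<in> carrier G. real (card (\<phi> g ` Y \<inter> Y)) \<ge> \<alpha> * real (card Y)}"

definition SymSpace :: "('g, 'm) monoid_scheme \<Rightarrow> ('k::field \<Rightarrow> 'v::ab_group_add \<Rightarrow> 'v)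
    \<Rightarrow> ('g \<Rightarrow> 'v \<Rightarrow> 'v) \<Rightarrow> real \<Rightarrow> 'v set \<Rightarrow> 'g set" where
  "SymSpace G scale \<rho> \<alpha> W = {g \<in> carrier G.
      real (vector_space.dim scale (\<rho> g ` W \<inter> W)) \<ge> \<alpha> * real (vector_space.dim scale W)}"

definition linear_rep :: "('g, 'm) monoid_scheme \<Rightarrow> ('k::field \<Rightarrow> 'v::ab_group_add \<Rightarrow> 'v)
    \<Rightarrow> ('g \<Rightarrow> 'v \<Rightarrow> 'v) \<Rightarrow> bool" where
  "linear_rep G scale \<rho> \<longleftrightarrow> group_action G UNIV \<rho> \<and> (\<forall>g \<in> carrier G. Vector_Spaces.linear scale scale (\<rho> g))"

end

theory Submission
  imports Defs
begin

text \<open>For \<open>a, b \<in> A\<close> the action of \<open>a\<close> maps \<open>a\<inverse>b\<cdot>Y \<inter> Y\<close> bijectively onto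
  \<open>bY \<inter> aY\<close>, while \<open>bY \<union> aY \<subseteq> A\<cdot>Y\<close>. As \<open>|aY| = |bY| = |Y|\<close>, inclusion-exclusion gives
  \<open>|a\<inverse>bY \<inter> Y| = 2|Y| - |bY \<union> aY| \<ge> 2|Y| - |A\<cdot>Y| \<ge> \<alpha>|Y|\<close>. The linear case is the same
  computation with dimensions, Grassmann's formula \<open>dim(U + V) + dim(U \<inter> V) = dim U + dim V\<close>
  replacing inclusion-exclusion.\<close>

lemma invprodE:
  assumes "g \<in> invprod G A"
  obtains a b where "a \<in> A" "b \<in> A" "g = inv\<^bsub>G\<^esub> a \<otimes>\<^bsub>G\<^esub> b"
  using assms unfolding invprod_def by blast

lemma (in group) invprod_subset_carrier:
  "A \<subseteq> carrier G \<Longrightarrow> invprod G A \<subseteq> carrier G"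
  by (auto simp: invprod_def)

context group_action
begin

lemma image_translate_Int:
  assumes a: "a \<in> carrier G" and b: "b \<in> carrier G" and Y: "Y \<subseteq> E"
  shows "\<phi> a ` (\<phi> (inv a \<otimes> b) ` Y \<inter> Y) = \<phi> b ` Y \<inter> \<phi> a ` Y"
proof -
  interpret G: group G by (rule group_hom.axioms(1)[OF group_hom])
  have g: "inv a \<otimes> b \<in> carrier G" using a b by simp
  have "\<phi> a (\<phi> (inv a \<otimes> b) y) = \<phi> b y" if "y \<in> Y" for y
    using composition_rule[of y a "inv a \<otimes> b"] that Y a b g by (auto simp: G.m_assoc[symmetric])
  then have "\<phi> a ` \<phi> (inv a \<otimes> b) ` Y = \<phi> b ` Y"
    by (auto simp: image_image intro!: image_cong)
  moreover have "\<phi> (inv a \<otimes> b) ` Y \<subseteq> E" using surj_prop[OF g] Y by blast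
  ultimately show ?thesis
    using inj_on_image_Int[OF inj_prop[OF a] _ Y] by simp
qed

lemma card_image_action: "g \<in> carrier G \<Longrightarrow> Y \<subseteq> E \<Longrightarrow> card (\<phi> g ` Y) = card Y"
  by (meson card_image inj_on_subset inj_prop)

lemma card_translate_Int:
  assumes a: "a \<in> carrier G" and b: "b \<in> carrier G" and Y: "Y \<subseteq> E"
  shows "card (\<phi> (inv a \<otimes> b) ` Y \<inter> Y) = card (\<phi> b ` Y \<inter> \<phi> a ` Y)"
proof -
  have "card (\<phi> (inv a \<otimes> b) ` Y \<inter> Y) = card (\<phi> a ` (\<phi> (inv a \<otimes> b) ` Y \<inter> Y))"
    using card_image_action[OF a] Y by (metis le_infI2)
  also have "\<dots> = card (\<phi> b ` Y \<inter> \<phi> a ` Y)"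
    by (simp only: image_translate_Int[OF assms])
  finally show ?thesis .
qed

lemma invprod_subset_SymSet:
  assumes A: "A \<subseteq> carrier G" "finite A" and Y: "Y \<subseteq> E" "finite Y"
    and small_doubling: "real (card {\<phi> a y | a y. a \<in> A \<and> y \<in> Y}) \<le> (2 - \<alpha>) * real (card Y)"
  shows "invprod G A \<subseteq> SymSet G \<phi> \<alpha> Y"
proof
  interpret G: group G by (rule group_hom.axioms(1)[OF group_hom])
  fix g assume g: "g \<in> invprod G A"
  then obtain a b where ab: "a \<in> A" "b \<in> A" and g_eq: "g = inv a \<otimes> b"
    by (rule invprodE)
  have a: "a \<in> carrier G" and b: "b \<in> carrier G" using ab A by auto
  let ?AY = "{\<phi> a y | a y. a \<in> A \<and> y \<in> Y}"
  have "?AY = (\<lambda>(a, y). \<phi> a y) ` (A \<times> Y)" by auto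
  then have "finite ?AY" using A Y by simp
  moreover have "\<phi> b ` Y \<union> \<phi> a ` Y \<subseteq> ?AY" using ab by blast
  ultimately have "card (\<phi> b ` Y \<union> \<phi> a ` Y) \<le> card ?AY" by (rule card_mono)
  moreover have "card (\<phi> b ` Y \<union> \<phi> a ` Y) + card (\<phi> b ` Y \<inter> \<phi> a ` Y) = 2 * card Y"
    using card_Un_Int[of "\<phi> b ` Y" "\<phi> a ` Y"] Y card_image_action[OF a Y(1)] card_image_action[OF b Y(1)]
    by simp
  ultimately have "real (card (\<phi> g ` Y \<inter> Y)) \<ge> \<alpha> * real (card Y)"
    using small_doubling card_translate_Int[OF a b Y(1)] g_eq
    by (simp add: left_diff_distrib)
  then show "g \<in> SymSet G \<phi> \<alpha> Y"
    using G.invprod_subset_carrier[OF A(1)] g by (auto simp: SymSet_def)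
qed

end

lemma (in finite_dimensional_vector_space) dim_Un_add_dim_Int:
  assumes "subspace U" "subspace V"
  shows "dim (U \<union> V) + dim (U \<inter> V) = dim U + dim V"
proof -
  have "span (U \<union> V) = {x + y | x y. x \<in> U \<and> y \<in> V}"
    using span_Un[of U V] assms by (simp add: span_eq_iff[THEN iffD2])
  then show ?thesis
    using dim_sums_Int[OF assms] dim_span[of "U \<union> V"] by simp
qed

lemma invprod_subset_SymSpace:
  fixes scale :: "'k::field \<Rightarrow> 'v::ab_group_add \<Rightarrow> 'v"
  assumes "finite_dimensional_vector_space scale B" and rep: "linear_rep G scale \<rho>"
    and A: "A \<subseteq> carrier G" and W: "module.subspace scale W"
    and small_doubling: "real (vector_space.dim scale (module.span scale {\<rho> a w | a w. a \<in> A \<and> w \<in> W}))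
            \<le> (2 - \<alpha>) * real (vector_space.dim scale W)"
  shows "invprod G A \<subseteq> SymSpace G scale \<rho> \<alpha> W"
proof
  interpret finite_dimensional_vector_space scale B by fact
  interpret pair: finite_dimensional_vector_space_pair_1 scale B scale by unfold_locales
  interpret group_action G UNIV \<rho> using rep by (simp add: linear_rep_def)
  interpret G: group G by (rule group_hom.axioms(1)[OF group_hom])
  have lin: "Vector_Spaces.linear scale scale (\<rho> g)" if "g \<in> carrier G" for g
    using rep that by (simp add: linear_rep_def)
  have dim_image: "dim (\<rho> g ` S) = dim S" if "g \<in> carrier G" for g S
    using pair.dim_image_eq[OF lin[OF that]] inj_prop[OF that] by (simp add: inj_on_subset)
  have subspace_image: "subspace (\<rho> g ` W)" if "g \<in> carrier G" for g
    by (rule pair.linear_subspace_image[OF lin[OF that] W])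
  fix g assume g: "g \<in> invprod G A"
  then obtain a b where ab: "a \<in> A" "b \<in> A" and g_eq: "g = inv\<^bsub>G\<^esub> a \<otimes>\<^bsub>G\<^esub> b"
    by (rule invprodE)
  have a: "a \<in> carrier G" and b: "b \<in> carrier G" using ab A by auto
  let ?AW = "{\<rho> a w | a w. a \<in> A \<and> w \<in> W}"
  have "dim (\<rho> b ` W \<union> \<rho> a ` W) \<le> dim (span ?AW)"
    unfolding dim_span by (rule dim_subset) (use ab in blast)
  moreover have "dim (\<rho> b ` W \<union> \<rho> a ` W) + dim (\<rho> b ` W \<inter> \<rho> a ` W) = 2 * dim W"
    using dim_Un_add_dim_Int[OF subspace_image[OF b] subspace_image[OF a]] dim_image[OF a] dim_image[OF b]
    by simp
  moreover have "dim (\<rho> g ` W \<inter> W) = dim (\<rho> b ` W \<inter> \<rho> a ` W)"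
    using dim_image[OF a, of "\<rho> g ` W \<inter> W"] image_translate_Int[OF a b, of W] g_eq by simp
  ultimately have "real (dim (\<rho> g ` W \<inter> W)) \<ge> \<alpha> * real (dim W)"
    using small_doubling by (simp add: left_diff_distrib)
  then show "g \<in> SymSpace G scale \<rho> \<alpha> W"
    using G.invprod_subset_carrier[OF A] g by (auto simp: SymSpace_def)
qed

theorem mainTheorem1:
  fixes G :: "('g, 'm) monoid_scheme" and \<alpha> :: real
    and X :: "'x set" and \<phi> :: "'g \<Rightarrow> 'x \<Rightarrow> 'x"
    and scale :: "'k::field \<Rightarrow> 'v::ab_group_add \<Rightarrow> 'v" and \<rho> :: "'g \<Rightarrow> 'v \<Rightarrow> 'v"
  assumes grp: "group G"
    and alpha: "0 < \<alpha>" "\<alpha> \<le> 1"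
  shows
    "(group_action G X \<phi> \<longrightarrow>
       (\<forall>A Y. A \<subseteq> carrier G \<and> finite A \<and> A \<noteq> {} \<and> Y \<subseteq> X \<and> finite Y \<and> Y \<noteq> {} \<and>
          real (card {\<phi> a y | a y. a \<in> A \<and> y \<in> Y}) \<le> (2 - \<alpha>) * real (card Y)
          \<longrightarrow> invprod G A \<subseteq> SymSet G \<phi> \<alpha> Y))
     \<and>
     ((\<exists>B. finite_dimensional_vector_space scale B) \<and> linear_rep G scale \<rho> \<longrightarrow>
       (\<forall>A W. A \<subseteq> carrier G \<and> module.subspace scale W \<and>
          real (vector_space.dim scale (module.span scale {\<rho> a w | a w. a \<in> A \<and> w \<in> W}))
            \<le> (2 - \<alpha>) * real (vector_space.dim scale W)
          \<longrightarrow> invprod G A \<subseteq> SymSpace G scale \<rho> \<alpha> W))"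
proof (intro conjI impI allI)
  fix A Y
  assume act: "group_action G X \<phi>"
    and "A \<subseteq> carrier G \<and> finite A \<and> A \<noteq> {} \<and> Y \<subseteq> X \<and> finite Y \<and> Y \<noteq> {} \<and>
      real (card {\<phi> a y | a y. a \<in> A \<and> y \<in> Y}) \<le> (2 - \<alpha>) * real (card Y)"
  then show "invprod G A \<subseteq> SymSet G \<phi> \<alpha> Y"
    by (intro group_action.invprod_subset_SymSet[OF act]) auto
next
  fix A W
  assume "(\<exists>B. finite_dimensional_vector_space scale B) \<and> linear_rep G scale \<rho>"
    and "A \<subseteq> carrier G \<and> module.subspace scale W \<and>
      real (vector_space.dim scale (module.span scale {\<rho> a w | a w. a \<in> A \<and> w \<in> W}))
        \<le> (2 - \<alpha>) * real (vector_space.dim scale W)"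
  then show "invprod G A \<subseteq> SymSpace G scale \<rho> \<alpha> W"
    by (elim conjE exE) (rule invprod_subset_SymSpace)
qed

end
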